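(* Let $X$ be a metric space with $\operatorname{cdim}X\le n$. Then there are constants $c_0>0$, $\delta>0$ and $r_0>0$ such that for every $r\in(0,r_0)$ there exists a sequence of open coverings $\mathcal U_j$, $j\in\mathbb N$, of $X$ with: (i) there is one color set $A$ with $|A|=n+1$ such that for each $j$, $\mathcal U_j=\bigcup_{a\in A}\mathcal U_j^a$ where each $\mathcal U_j^a$ consists of pairwise disjoint sets; (ii) for every $j$, $\delta r^j\le\operatorname{mesh}(\mathcal U_j)\le r^j$ and $L(\mathcal U_j)\ge c_0\operatorname{mesh}(\mathcal U_j)$; (iii) for every $i>j$, $\mathcal U_i$ is inscribed in $\mathcal U_j$; (iv) for every $a\in A$ the union $\mathcal U^a=\bigcup_{j\in\mathbb N}\mathcal U_j^a$ is separated.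
   Context: A covering $\mathcal U'$ is inscribed in $\mathcal U$ if every member of $\mathcal U'$ is contained in some member of $\mathcal U$. A family is separated if any two different members are either disjoint or one contains the other. Capacity dimension: for an open covering $\mathcal U$ of a metric space $Z$ let $\operatorname{mesh}(\mathcal U,z)=\sup\{\operatorname{diam}U:z\in U\in\mathcal U\}$, $\operatorname{mesh}(\mathcal U)=\sup_U\operatorname{diam}U$, $L(\mathcal U,z)=\min\{\sup_{U\in\mathcal U}\operatorname{dist}(z,Z\setminus U),\operatorname{mesh}(\mathcal U,z)\}$, $L(\mathcal U)=\inf_zL(\mathcal U,z)$, $\operatorname{cap}(\mathcal U)=L(\mathcal U)/\operatorname{mesh}(\mathcal U)$ (set to $1$ if $\operatorname{mesh}=0$ or $L=\operatorname{mesh}=\infty$). A covering is $(m+1)$-colored if it is a union of $m+1$ subfamilies each of pairwise disjoint sets. For $\tau>0$, $\delta\in(0,1)$, integer $m\ge0$, $c_\tau(Z,m,\delta)$ is the supremum (0 if empty) of $\operatorname{cap}(\mathcal U)$ over open $(m+1)$-colored coverings with $\delta\tau\le\operatorname{mesh}(\mathcal U)\le\tau$; $c(Z,m,\delta)=\liminf_{\tau\to0}c_\tau(Z,m,\delta)$; $c(Z,m)=\lim_{\delta\to0}c(Z,m,\delta)$; $\operatorname{cdim}Z=\inf\{m:c(Z,m)>0\}$. *)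

theory Defs
  imports "HOL-Analysis.Analysis"
begin

text \<open>Capacity dimension of a metric space (the whole type 'a).  Diameters and
  related quantities take values in the extended reals, so that unbounded sets
  have diameter \<infinity>.\<close>

definition ediam :: "'a::metric_space set \<Rightarrow> ereal" where
  "ediam S = (if S = {} then 0 else (SUP p\<in>S \<times> S. ereal (dist (fst p) (snd p))))"

definition mesh :: "'a::metric_space set set \<Rightarrow> ereal" where
  "mesh \<U> = Sup (insert 0 (ediam ` \<U>))"

definition mesh_at :: "'a::metric_space set set \<Rightarrow> 'a \<Rightarrow> ereal" where
  "mesh_at \<U> z = Sup (insert 0 (ediam ` {U\<in>\<U>. z \<in> U}))"

definition dist_compl :: "'a::metric_space \<Rightarrow> 'a set \<Rightarrow> ereal" where
  "dist_compl z U = (if U = UNIV then \<infinity> else ereal (infdist z (- U)))"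

definition Leb_at :: "'a::metric_space set set \<Rightarrow> 'a \<Rightarrow> ereal" where
  "Leb_at \<U> z = min (Sup (insert 0 ((\<lambda>U. dist_compl z U) ` \<U>))) (mesh_at \<U> z)"

definition Leb :: "'a::metric_space set set \<Rightarrow> ereal" where
  "Leb \<U> = (INF z. Leb_at \<U> z)"

definition cap :: "'a::metric_space set set \<Rightarrow> ereal" where
  "cap \<U> = (if mesh \<U> = 0 \<or> (Leb \<U> = \<infinity> \<and> mesh \<U> = \<infinity>) then 1 else Leb \<U> / mesh \<U>)"

definition open_covering :: "'a::topological_space set set \<Rightarrow> bool" where
  "open_covering \<U> \<longleftrightarrow> (\<forall>U\<in>\<U>. open U) \<and> \<Union>\<U> = UNIV"

definition colored :: "nat \<Rightarrow> 'a set set \<Rightarrow> bool" where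
  "colored k \<U> \<longleftrightarrow> (\<exists>F :: nat \<Rightarrow> 'a set set. \<U> = (\<Union>i<k. F i) \<and> (\<forall>i<k. disjoint (F i)))"

definition c_tau :: "'a::metric_space itself \<Rightarrow> real \<Rightarrow> nat \<Rightarrow> real \<Rightarrow> ereal" where
  "c_tau _ \<tau> m \<delta> =
     (let S = {cap \<U> | \<U> :: 'a set set. open_covering \<U> \<and> colored (m + 1) \<U>
                 \<and> ereal (\<delta> * \<tau>) \<le> mesh \<U> \<and> mesh \<U> \<le> ereal \<tau>}
      in if S = {} then 0 else Sup S)"

definition c_delta :: "'a::metric_space itself \<Rightarrow> nat \<Rightarrow> real \<Rightarrow> ereal" where
  "c_delta X m \<delta> = Liminf (at_right 0) (\<lambda>\<tau>. c_tau X \<tau> m \<delta>)"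

definition c_m :: "'a::metric_space itself \<Rightarrow> nat \<Rightarrow> ereal" where
  "c_m X m = Lim (at_right 0) (\<lambda>\<delta>. c_delta X m \<delta>)"

definition cdim :: "'a::metric_space itself \<Rightarrow> enat" where
  "cdim X = Inf (enat ` {m. c_m X m > 0})"

definition inscribed :: "'a set set \<Rightarrow> 'a set set \<Rightarrow> bool" where
  "inscribed \<V> \<U> \<longleftrightarrow> (\<forall>V\<in>\<V>. \<exists>U\<in>\<U>. V \<subseteq> U)"

definition separated :: "'a set set \<Rightarrow> bool" where
  "separated \<U> \<longleftrightarrow> (\<forall>U\<in>\<U>. \<forall>V\<in>\<U>. U \<noteq> V \<longrightarrow> U \<inter> V = {} \<or> U \<subseteq> V \<or> V \<subseteq> U)"

end

theory Submission
  imports Defs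
begin

(* Since cdim X <= n, at every small scale tau there is an (n+1)-colored open cover of mesh at
   most tau and Lebesgue number at least c tau; as the Lebesgue number also bounds the local
   mesh from below, every point has another one at distance between c tau / 2 and tau.  Take
   such covers at the scales r^k / 2 and shrink every member by c r^k / 4: distinct members of
   one color at level k are then more than 2 r^(k+1) apart, while balls of radius c r^k / 8
   still lie in single members.  Now replace a level-k member U by its cluster, the union of
   all members of the same color reachable from U by chains of intersecting members of finer
   levels.  An induction over the levels shows that such a chain stays within r^(k+1) of U,
   because it cannot pass between two different members of one level.  Hence clusters still
   have diameter at most r^k, clusters of one color are disjoint or nested, and a cluster of
   level i > j lies in the ball of radius c r^j / 8 around any point of its level-i member,
   hence inside a single cluster of level j. *)

section \<open>Colored covers with large Lebesgue number\<close>

lemma dist_le_ediam: "x \<in> S \<Longrightarrow> y \<in> S \<Longrightarrow> ereal (dist x y) \<le> ediam S"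
  unfolding ediam_def by (auto intro!: SUP_upper2[of "(x,y)"])

lemma ediam_le: "(\<And>x y. x \<in> S \<Longrightarrow> y \<in> S \<Longrightarrow> dist x y \<le> d) \<Longrightarrow> 0 \<le> d \<Longrightarrow> ediam S \<le> ereal d"
  unfolding ediam_def by (auto intro!: SUP_least)

lemma ediam_gtD: "ereal a < ediam S \<Longrightarrow> 0 \<le> a \<Longrightarrow> \<exists>x\<in>S. \<exists>y\<in>S. a < dist x y"
  unfolding ediam_def by (auto split: if_splits simp: less_SUP_iff)

lemma ediam_le_mesh: "U \<in> \<U> \<Longrightarrow> ediam U \<le> mesh \<U>"
  unfolding mesh_def by (intro Sup_upper) auto

lemma mesh_le: "(\<And>U. U \<in> \<U> \<Longrightarrow> ediam U \<le> ereal d) \<Longrightarrow> 0 \<le> d \<Longrightarrow> mesh \<U> \<le> ereal d"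
  unfolding mesh_def by (auto intro!: Sup_least)

lemma dist_le_mesh: "U \<in> \<U> \<Longrightarrow> x \<in> U \<Longrightarrow> y \<in> U \<Longrightarrow> mesh \<U> \<le> ereal d \<Longrightarrow> dist x y \<le> d"
  using dist_le_ediam ediam_le_mesh by (metis ereal_less_eq(3) order_trans)

lemma ball_subset_iff_dist_compl: "ball z \<rho> \<subseteq> U \<longleftrightarrow> ereal \<rho> \<le> dist_compl z U"
proof (cases "U = UNIV")
  case False
  have "ball z \<rho> \<subseteq> U \<longleftrightarrow> (\<forall>a\<in>-U. \<rho> \<le> dist z a)"
    by (auto simp: subset_eq) (meson ComplI not_less)
  also have "\<dots> \<longleftrightarrow> \<rho> \<le> infdist z (- U)"
  proof
    assume "\<forall>a\<in>-U. \<rho> \<le> dist z a"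
    moreover have "- U \<noteq> {}"
      using False by auto
    ultimately show "\<rho> \<le> infdist z (- U)"
      by (auto simp: infdist_notempty intro!: cINF_greatest)
  qed (use infdist_le order_trans in blast)
  finally show ?thesis using False by (simp add: dist_compl_def)
qed (simp add: dist_compl_def)

lemma Leb_at_geI:
  assumes "U \<in> \<U>" "ball z \<rho> \<subseteq> U" "d \<le> \<rho>" "ereal d \<le> ediam U" "0 < \<rho>"
  shows "ereal d \<le> Leb_at \<U> z"
proof -
  have "ereal d \<le> dist_compl z U"
    using assms(2,3) ball_subset_iff_dist_compl order_trans by fastforce
  also have "\<dots> \<le> Sup (insert 0 ((\<lambda>U. dist_compl z U) ` \<U>))"
    using assms(1) by (intro Sup_upper) auto
  finally have "ereal d \<le> Sup (insert 0 ((\<lambda>U. dist_compl z U) ` \<U>))" .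
  moreover have "z \<in> U"
    using assms(2,5) by auto
  then have "ediam U \<le> mesh_at \<U> z"
    using assms(1) unfolding mesh_at_def by (intro Sup_upper) auto
  ultimately show ?thesis
    using assms(4) unfolding Leb_at_def by simp
qed

lemma cap_nonneg: "0 \<le> cap \<U>"
proof -
  have "0 \<le> Leb_at \<U> z" for z
    unfolding Leb_at_def mesh_at_def by (auto intro: Sup_upper)
  then have "0 \<le> Leb \<U>"
    unfolding Leb_def by (auto intro: INF_greatest)
  moreover have "0 \<le> mesh \<U>"
    unfolding mesh_def by (auto intro: Sup_upper)
  ultimately show ?thesis
    unfolding cap_def by (auto intro: zero_le_divide_ereal)
qed

lemma c_delta_nonneg: "0 \<le> c_delta X m \<delta>"
proof -
  have "0 \<le> c_tau X \<tau> m \<delta>" for \<tau>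
    unfolding c_tau_def Let_def using cap_nonneg by (auto intro: Sup_upper2)
  then show ?thesis
    unfolding c_delta_def by (intro Liminf_bounded always_eventually) simp
qed

lemma cdim_le_imp_c_delta_pos:
  assumes "cdim X \<le> enat n"
  obtains m \<delta> where "m \<le> n" "0 < \<delta>" "0 < c_delta X m \<delta>"
proof -
  define M where "M = {m. c_m X m > 0}"
  have "M \<noteq> {}"
  proof
    assume "M = {}"
    then have "cdim X = \<infinity>"
      unfolding cdim_def M_def[symmetric] by (simp add: Inf_enat_def)
    then show False using assms by simp
  qed
  then obtain m0 where "m0 \<in> M"
    by blast
  then have "Inf (enat ` M) \<in> enat ` M"
    by (intro wellorder_InfI) auto
  then obtain m where m: "0 < c_m X m" "cdim X = enat m"
    unfolding cdim_def M_def by auto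
  have "\<exists>\<delta>>0. 0 < c_delta X m \<delta>"
  proof (rule ccontr)
    assume "\<not> ?thesis"
    then have "\<forall>\<^sub>F \<delta> in at_right 0. c_delta X m \<delta> = 0"
      using c_delta_nonneg by (auto simp: eventually_at_right_field intro!: exI[of _ 1] antisym)
    then have "c_m X m = Lim (at_right (0::real)) (\<lambda>_. 0)"
      unfolding c_m_def by (rule Lim_cong) simp
    also have "\<dots> = 0"
      by (rule tendsto_Lim) (auto simp: trivial_limit_at_right_real)
    finally show False using m(1) by simp
  qed
  then show ?thesis
    using that m(2) assms by auto
qed

lemma c_delta_pos_imp_coverings:
  fixes X :: "'a::metric_space itself"
  assumes "0 < c_delta X m \<delta>"
  obtains c \<tau>0 where "0 < c" "0 < \<tau>0"
    "\<And>\<tau>. 0 < \<tau> \<Longrightarrow> \<tau> < \<tau>0 \<Longrightarrow> \<exists>\<U> :: 'a set set. open_covering \<U> \<and> colored (m + 1) \<U> \<and>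
       ereal (\<delta> * \<tau>) \<le> mesh \<U> \<and> mesh \<U> \<le> ereal \<tau> \<and> ereal c < cap \<U>"
proof -
  obtain c where c: "0 < ereal c" "ereal c < c_delta X m \<delta>"
    using ereal_dense2[OF assms] by blast
  have "\<forall>\<^sub>F \<tau> in at_right 0. ereal c < c_tau X \<tau> m \<delta>"
    using less_LiminfD c(2) unfolding c_delta_def by blast
  then obtain \<tau>0 where "0 < \<tau>0" and \<tau>0: "\<And>\<tau>. 0 < \<tau> \<Longrightarrow> \<tau> < \<tau>0 \<Longrightarrow> ereal c < c_tau X \<tau> m \<delta>"
    unfolding eventually_at_right_field by auto
  show ?thesis
  proof (rule that[of c \<tau>0])
    fix \<tau> :: real assume "0 < \<tau>" "\<tau> < \<tau>0"
    then show "\<exists>\<U> :: 'a set set. open_covering \<U> \<and> colored (m + 1) \<U> \<and>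
       ereal (\<delta> * \<tau>) \<le> mesh \<U> \<and> mesh \<U> \<le> ereal \<tau> \<and> ereal c < cap \<U>"
      using \<tau>0[of \<tau>] c(1) unfolding c_tau_def Let_def by (auto split: if_splits simp: less_Sup_iff)
  qed (use c \<open>0 < \<tau>0\<close> in auto)
qed

lemma Leb_le_Leb_at: "Leb \<U> \<le> Leb_at \<U> z"
  unfolding Leb_def by (rule INF_lower) simp

definition colored_Lebesgue_cover :: "nat \<Rightarrow> real \<Rightarrow> real \<Rightarrow> (nat \<Rightarrow> 'a::metric_space set set) \<Rightarrow> bool" where
  "colored_Lebesgue_cover n \<rho> \<tau> F \<longleftrightarrow>
     (\<forall>i. \<forall>U\<in>F i. open U \<and> (\<forall>x\<in>U. \<forall>y\<in>U. dist x y \<le> \<tau>)) \<and> (\<forall>i. disjoint (F i)) \<and>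
     (\<forall>z. \<exists>i\<le>n. \<exists>U\<in>F i. ball z \<rho> \<subseteq> U)"

lemma colored_Lebesgue_cover_of_covering:
  fixes \<U> :: "'a::metric_space set set"
  assumes "open_covering \<U>" "colored (m + 1) \<U>" "m \<le> n"
    and "mesh \<U> \<le> ereal \<tau>" "0 \<le> \<rho>" "ereal \<rho> < Leb \<U>"
  shows "\<exists>F :: nat \<Rightarrow> 'a set set. colored_Lebesgue_cover n \<rho> \<tau> F"
proof -
  obtain F where F: "\<U> = (\<Union>i<m+1. F i)" "\<forall>i<m+1. disjoint (F i)"
    using assms(2) unfolding colored_def by blast
  define G where "G i = (if i \<le> m then F i else {})" for i
  have \<U>_G: "U \<in> \<U> \<longleftrightarrow> (\<exists>i\<le>m. U \<in> G i)" for U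
    unfolding F G_def by auto
  have ball_in: "\<exists>U\<in>\<U>. ball z \<rho> \<subseteq> U" for z
  proof -
    have "ereal \<rho> < Leb_at \<U> z"
      by (rule order_less_le_trans[OF assms(6) Leb_le_Leb_at])
    then have "ereal \<rho> < Sup (insert 0 ((\<lambda>U. dist_compl z U) ` \<U>))"
      unfolding Leb_at_def by simp
    then obtain U where "U \<in> \<U>" "ereal \<rho> < dist_compl z U"
      using assms(5) unfolding less_Sup_iff by auto
    then show ?thesis
      using ball_subset_iff_dist_compl by (metis less_imp_le)
  qed
  have "colored_Lebesgue_cover n \<rho> \<tau> G"
    unfolding colored_Lebesgue_cover_def
  proof (intro conjI allI)
    fix i
    have "G i \<subseteq> \<U>"
      by (auto simp: G_def F less_Suc_eq_le)
    moreover have "open U" if "U \<in> \<U>" for U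
      using assms(1) that unfolding open_covering_def by blast
    moreover have "dist x y \<le> \<tau>" if "U \<in> \<U>" "x \<in> U" "y \<in> U" for U x y
      using dist_le_mesh[OF that assms(4)] .
    ultimately show "\<forall>U\<in>G i. open U \<and> (\<forall>x\<in>U. \<forall>y\<in>U. dist x y \<le> \<tau>)"
      by blast
  next
    fix i show "disjoint (G i)"
      using F(2) by (simp add: G_def)
  next
    fix z
    obtain U where U: "U \<in> \<U>" "ball z \<rho> \<subseteq> U"
      using ball_in by blast
    then obtain i where "i \<le> m" "U \<in> G i"
      using \<U>_G by blast
    then show "\<exists>i\<le>n. \<exists>U\<in>G i. ball z \<rho> \<subseteq> U"
      using U(2) assms(3) by (intro exI[of _ i]) auto
  qed
  then show ?thesis by blast
qed

lemma annulus_point_of_Leb: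
  fixes \<U> :: "'a::metric_space set set" and z :: 'a
  assumes "mesh \<U> \<le> ereal \<tau>" "0 \<le> \<rho>" "ereal \<rho> < Leb \<U>"
  shows "\<exists>w. \<rho> / 2 \<le> dist z w \<and> dist z w \<le> \<tau>"
proof -
  have "ereal \<rho> < Leb_at \<U> z"
    by (rule order_less_le_trans[OF assms(3) Leb_le_Leb_at])
  then have "ereal \<rho> < mesh_at \<U> z"
    unfolding Leb_at_def by simp
  then obtain U where U: "U \<in> \<U>" "z \<in> U" "ereal \<rho> < ediam U"
    using assms(2) unfolding mesh_at_def less_Sup_iff by auto
  then obtain x y where xy: "x \<in> U" "y \<in> U" "\<rho> < dist x y"
    using ediam_gtD assms(2) by blast
  have "dist x y \<le> dist z x + dist z y"
    by (metis dist_commute dist_triangle)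
  then have "\<rho> / 2 \<le> dist z x \<or> \<rho> / 2 \<le> dist z y"
    using xy by linarith
  then show ?thesis
    using dist_le_mesh[OF U(1,2) _ assms(1)] xy by blast
qed

lemma Leb_gt_of_cap_gt:
  assumes "0 < a" "0 \<le> c" "ereal a \<le> mesh \<U>" "mesh \<U> < \<infinity>" "ereal c < cap \<U>"
  shows "ereal (c * a) < Leb \<U>"
proof -
  obtain M where M: "mesh \<U> = ereal M" "a \<le> M"
    using assms(3,4) by (cases "mesh \<U>") auto
  then have "0 < M"
    using assms(1) by linarith
  then have "cap \<U> = Leb \<U> / ereal M"
    unfolding cap_def using M(1) by simp
  then have "ereal (M * c) < Leb \<U>"
    using assms(5) \<open>0 < M\<close> ereal_less_divide_pos[of "ereal M" "ereal c" "Leb \<U>"] by simp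
  moreover have "c * a \<le> M * c"
    using mult_right_mono[OF M(2) assms(2)] by (simp add: mult.commute)
  ultimately show ?thesis
    by (meson ereal_less_eq(3) order.strict_trans1)
qed

lemma cdim_le_imp_colored_Lebesgue_covers:
  assumes "cdim TYPE('a::metric_space) \<le> enat n"
  obtains c \<tau>0 where "0 < c" "c \<le> 1" "0 < \<tau>0"
    "\<And>\<tau>. 0 < \<tau> \<Longrightarrow> \<tau> < \<tau>0 \<Longrightarrow> \<exists>F :: nat \<Rightarrow> 'a set set. colored_Lebesgue_cover n (c * \<tau>) \<tau> F"
    "\<And>\<tau> z :: 'a. 0 < \<tau> \<Longrightarrow> \<tau> < \<tau>0 \<Longrightarrow> \<exists>w. c * \<tau> / 2 \<le> dist z w \<and> dist z w \<le> \<tau>"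
proof -
  obtain m \<delta> where m: "m \<le> n" "0 < \<delta>" "0 < c_delta TYPE('a) m \<delta>"
    using cdim_le_imp_c_delta_pos[OF assms] .
  obtain c \<tau>0 where c: "0 < c" "0 < \<tau>0" and coverings: "\<And>\<tau>. 0 < \<tau> \<Longrightarrow> \<tau> < \<tau>0 \<Longrightarrow>
      \<exists>\<U> :: 'a set set. open_covering \<U> \<and> colored (m + 1) \<U> \<and>
        ereal (\<delta> * \<tau>) \<le> mesh \<U> \<and> mesh \<U> \<le> ereal \<tau> \<and> ereal c < cap \<U>"
    using c_delta_pos_imp_coverings[OF m(3)] by blast
  define c' where "c' = min (c * \<delta>) 1"
  have c': "0 < c'" "c' \<le> 1" "c' \<le> c * \<delta>"
    unfolding c'_def using c m by auto
  have Leb_large: "\<exists>\<U> :: 'a set set. open_covering \<U> \<and> colored (m + 1) \<U> \<and>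
      mesh \<U> \<le> ereal \<tau> \<and> ereal (c' * \<tau>) < Leb \<U>" if \<tau>: "0 < \<tau>" "\<tau> < \<tau>0" for \<tau>
  proof -
    obtain \<U> :: "'a set set" where \<U>: "open_covering \<U>" "colored (m + 1) \<U>"
      "ereal (\<delta> * \<tau>) \<le> mesh \<U>" "mesh \<U> \<le> ereal \<tau>" "ereal c < cap \<U>"
      using coverings[OF \<tau>] by blast
    have "0 < \<delta> * \<tau>"
      using m(2) \<tau>(1) by simp
    moreover have "mesh \<U> < \<infinity>"
      using \<U>(4) by (rule le_less_trans) simp
    ultimately have "ereal (c * (\<delta> * \<tau>)) < Leb \<U>"
      using Leb_gt_of_cap_gt[of "\<delta> * \<tau>" c] \<U>(3,5) c(1) by simp
    moreover have "c' * \<tau> \<le> c * (\<delta> * \<tau>)"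
      using c'(3) \<tau>(1) by (simp add: mult_right_mono mult.assoc[symmetric])
    ultimately have "ereal (c' * \<tau>) < Leb \<U>"
      by (meson ereal_less_eq(3) order.strict_trans1)
    then show ?thesis
      using \<U>(1,2,4) by blast
  qed
  show ?thesis
  proof (rule that[OF c'(1,2) c(2)])
    fix \<tau> :: real assume \<tau>: "0 < \<tau>" "\<tau> < \<tau>0"
    obtain \<U> :: "'a set set" where \<U>: "open_covering \<U>" "colored (m + 1) \<U>"
      "mesh \<U> \<le> ereal \<tau>" "ereal (c' * \<tau>) < Leb \<U>"
      using Leb_large[OF \<tau>] by blast
    have "0 \<le> c' * \<tau>"
      using c'(1) \<tau>(1) by simp
    then show "\<exists>F :: nat \<Rightarrow> 'a set set. colored_Lebesgue_cover n (c' * \<tau>) \<tau> F"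
      by (rule colored_Lebesgue_cover_of_covering[OF \<U>(1,2) m(1) \<U>(3) _ \<U>(4)])
  next
    fix \<tau> :: real and z :: 'a assume \<tau>: "0 < \<tau>" "\<tau> < \<tau>0"
    obtain \<U> :: "'a set set" where \<U>: "mesh \<U> \<le> ereal \<tau>" "ereal (c' * \<tau>) < Leb \<U>"
      using Leb_large[OF \<tau>] by blast
    have "0 \<le> c' * \<tau>"
      using c'(1) \<tau>(1) by simp
    then show "\<exists>w. c' * \<tau> / 2 \<le> dist z w \<and> dist z w \<le> \<tau>"
      by (rule annulus_point_of_Leb[OF \<U>(1) _ \<U>(2)])
  qed
qed

section \<open>Chains and clusters in multiscale families\<close>

(* A multiscale family is a set of pairs (k, W) placing the set W at level k; the same set may
   occur at several levels. *)

definition linked :: "(nat \<times> 'a set) set \<Rightarrow> nat set \<Rightarrow> nat \<times> 'a set \<Rightarrow> nat \<times> 'a set \<Rightarrow> bool" where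
  "linked N L p q \<longleftrightarrow> p \<in> N \<and> q \<in> N \<and> fst q \<in> L \<and> snd p \<inter> snd q \<noteq> {}"

definition band_chain :: "(nat \<times> 'a set) set \<Rightarrow> nat set \<Rightarrow> nat \<times> 'a set \<Rightarrow> nat \<times> 'a set \<Rightarrow> bool" where
  "band_chain N L p q \<longleftrightarrow> p \<in> N \<and> fst p \<in> L \<and> (linked N L)\<^sup>*\<^sup>* p q"

definition adjoins :: "(nat \<times> 'a set) set \<Rightarrow> nat set \<Rightarrow> nat \<times> 'a set \<Rightarrow> nat \<times> 'a set \<Rightarrow> bool" where
  "adjoins N L p Z \<longleftrightarrow> p = Z \<or> (\<exists>q. band_chain N L p q \<and> snd q \<inter> snd Z \<noteq> {})"

definition cluster :: "(nat \<times> 'a set) set \<Rightarrow> nat \<times> 'a set \<Rightarrow> 'a set" where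
  "cluster N p = \<Union>{snd q | q. (linked N {Suc (fst p)..})\<^sup>*\<^sup>* p q}"

lemma linked_chain_mem: "(linked N L)\<^sup>*\<^sup>* p q \<Longrightarrow> p \<in> N \<Longrightarrow> q \<in> N"
  by (induction rule: rtranclp_induct) (auto simp: linked_def)

lemma linked_chain_level: "(linked N L)\<^sup>*\<^sup>* p q \<Longrightarrow> q = p \<or> fst q \<in> L"
  by (induction rule: rtranclp_induct) (auto simp: linked_def)

lemma linked_chain_mono: "L \<subseteq> L' \<Longrightarrow> (linked N L)\<^sup>*\<^sup>* p q \<Longrightarrow> (linked N L')\<^sup>*\<^sup>* p q"
  by (erule rtranclp_mono[THEN predicate2D, rotated]) (auto simp: linked_def)

lemma linked_chain_converse:
  assumes "(linked N L)\<^sup>*\<^sup>* p q" "p \<in> N" "insert (fst p) L \<subseteq> L'"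
  shows "(linked N L')\<^sup>*\<^sup>* q p"
  using assms(1)
proof (induction rule: rtranclp_induct)
  case (step q s)
  have "linked N L' s q"
    using step.hyps linked_chain_mem[OF step.hyps(1) assms(2)] linked_chain_level[OF step.hyps(1)]
      assms(3) by (auto simp: linked_def)
  then show ?case
    using step.IH by (rule converse_rtranclp_into_rtranclp)
qed simp

lemma band_chain_refl: "p \<in> N \<Longrightarrow> fst p \<in> L \<Longrightarrow> band_chain N L p p"
  unfolding band_chain_def by simp

lemma band_chain_snoc: "band_chain N L p q \<Longrightarrow> linked N L q s \<Longrightarrow> band_chain N L p s"
  unfolding band_chain_def by auto

lemma band_chain_cons: "linked N L s p \<Longrightarrow> fst s \<in> L \<Longrightarrow> band_chain N L p q \<Longrightarrow> band_chain N L s q"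
  unfolding band_chain_def linked_def by (auto intro: converse_rtranclp_into_rtranclp)

lemma band_chain_bounded:
  assumes "band_chain N {k..} p q"
  shows "\<exists>K. band_chain N {k..<K} p q"
proof -
  have "(linked N {k..})\<^sup>*\<^sup>* p q"
    using assms unfolding band_chain_def by simp
  then have "\<exists>K. fst p < K \<and> (linked N {k..<K})\<^sup>*\<^sup>* p q"
  proof (induction rule: rtranclp_induct)
    case base
    show ?case by (intro exI[of _ "Suc (fst p)"]) simp
  next
    case (step q s)
    then obtain K where K: "fst p < K" "(linked N {k..<K})\<^sup>*\<^sup>* p q"
      by blast
    define K' where "K' = max K (Suc (fst s))"
    have "(linked N {k..<K'})\<^sup>*\<^sup>* p q"
      using K(2) by (rule linked_chain_mono[rotated]) (auto simp: K'_def)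
    moreover have "linked N {k..<K'} q s"
      using step.hyps(2) by (auto simp: linked_def K'_def)
    ultimately show ?case
      using K(1) by (intro exI[of _ K']) (auto simp: K'_def)
  qed
  then show ?thesis
    using assms unfolding band_chain_def by auto
qed

lemma adjoins_linked:
  assumes "adjoins N L q Z" "s \<in> N" "fst s \<in> L" "snd q \<inter> snd s \<noteq> {}"
  shows "adjoins N L s Z"
proof (cases "q = Z")
  case True
  then show ?thesis
    using assms band_chain_refl[of s N L] unfolding adjoins_def by blast
next
  case False
  then obtain Q where Q: "band_chain N L q Q" "snd Q \<inter> snd Z \<noteq> {}"
    using assms(1) unfolding adjoins_def by blast
  have "linked N L s q"
    using assms(2,4) Q(1) unfolding band_chain_def linked_def by blast
  then have "band_chain N L s Q"
    using assms(3) Q(1) by (rule band_chain_cons)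
  then show ?thesis
    using Q(2) unfolding adjoins_def by blast
qed

lemma mem_cluster_iff: "y \<in> cluster N p \<longleftrightarrow> (\<exists>q. (linked N {Suc (fst p)..})\<^sup>*\<^sup>* p q \<and> y \<in> snd q)"
  unfolding cluster_def by blast

lemma subset_cluster: "snd p \<subseteq> cluster N p"
  unfolding cluster_def by blast

lemma open_cluster:
  assumes "\<And>q. q \<in> N \<Longrightarrow> open (snd q)" "p \<in> N"
  shows "open (cluster N p)"
proof -
  have "open (snd q)" if "(linked N {Suc (fst p)..})\<^sup>*\<^sup>* p q" for q
    using assms linked_chain_mem[OF that] by blast
  then show ?thesis
    unfolding cluster_def by (intro open_Union) blast
qed

lemma cluster_empty: "cluster N (j, {}) = {}"
proof -
  have "(linked N L)\<^sup>*\<^sup>* (j, {}) q \<longleftrightarrow> q = (j, {})" for L q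
    by (auto elim: converse_rtranclpE simp: linked_def)
  then show ?thesis
    unfolding cluster_def by simp
qed

lemma cluster_subset_cluster:
  assumes "(j, U) \<in> N" "(i, W) \<in> N" "j < i" "cluster N (j, U) \<inter> cluster N (i, W) \<noteq> {}"
  shows "cluster N (i, W) \<subseteq> cluster N (j, U)"
proof -
  obtain y where "y \<in> cluster N (j, U)" "y \<in> cluster N (i, W)"
    using assms(4) by blast
  then obtain q1 q2 where q1: "(linked N {Suc j..})\<^sup>*\<^sup>* (j, U) q1" "y \<in> snd q1"
    and q2: "(linked N {Suc i..})\<^sup>*\<^sup>* (i, W) q2" "y \<in> snd q2"
    unfolding mem_cluster_iff by auto
  have "fst q2 \<in> {Suc j..}"
    using linked_chain_level[OF q2(1)] assms(3) by auto
  then have "linked N {Suc j..} q1 q2"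
    using linked_chain_mem[OF q1(1) assms(1)] linked_chain_mem[OF q2(1) assms(2)] q1(2) q2(2)
    unfolding linked_def by blast
  with q1(1) have "(linked N {Suc j..})\<^sup>*\<^sup>* (j, U) q2"
    by (rule rtranclp.rtrancl_into_rtrancl)
  moreover have "(linked N {Suc j..})\<^sup>*\<^sup>* q2 (i, W)"
    by (rule linked_chain_converse[OF q2(1) assms(2)]) (use assms(3) in auto)
  ultimately have to_iW: "(linked N {Suc j..})\<^sup>*\<^sup>* (j, U) (i, W)"
    by (rule rtranclp_trans)
  show ?thesis
  proof
    fix z assume "z \<in> cluster N (i, W)"
    then obtain q where q: "(linked N {Suc i..})\<^sup>*\<^sup>* (i, W) q" "z \<in> snd q"
      unfolding mem_cluster_iff by auto
    then have "(linked N {Suc j..})\<^sup>*\<^sup>* (i, W) q"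
      using assms(3) by (auto intro: linked_chain_mono[of "{Suc i..}", rotated])
    with to_iW have "(linked N {Suc j..})\<^sup>*\<^sup>* (j, U) q"
      by (rule rtranclp_trans)
    then show "z \<in> cluster N (j, U)"
      using q(2) unfolding mem_cluster_iff fst_conv by blast
  qed
qed

locale multiscale_family =
  fixes N :: "(nat \<times> 'a::metric_space set) set" and r :: real
  assumes r_pos: "0 < r" and r_le: "r \<le> 1 / 4"
    and dist_level: "\<And>k W x y. (k, W) \<in> N \<Longrightarrow> x \<in> W \<Longrightarrow> y \<in> W \<Longrightarrow> dist x y \<le> r ^ k / 2"
    and separated_level: "\<And>k W W' x y. (k, W) \<in> N \<Longrightarrow> (k, W') \<in> N \<Longrightarrow> W \<noteq> W' \<Longrightarrow>
      x \<in> W \<Longrightarrow> y \<in> W' \<Longrightarrow> 2 * r ^ Suc k < dist x y"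
begin

lemma power_Suc_le_quarter: "r ^ Suc k \<le> r ^ k / 4"
proof -
  have "r * r ^ k \<le> 1 / 4 * r ^ k"
    using r_le r_pos by (intro mult_right_mono) auto
  then show ?thesis
    by simp
qed

lemma same_level_eq:
  assumes "Z \<in> N" "Z' \<in> N" "fst Z = fst Z'" "w \<in> snd Z" "z \<in> snd Z'" "dist w z \<le> 2 * r ^ Suc (fst Z)"
  shows "Z = Z'"
proof (rule ccontr)
  assume "Z \<noteq> Z'"
  then have "snd Z \<noteq> snd Z'"
    using assms(3) by (simp add: prod_eq_iff)
  moreover have "(fst Z, snd Z) \<in> N"
    using assms(1) by simp
  moreover have "(fst Z, snd Z') \<in> N"
    using assms(2) unfolding assms(3) by simp
  ultimately have "2 * r ^ Suc (fst Z) < dist w z"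
    using separated_level assms(4,5) by blast
  then show False
    using assms(6) by simp
qed

context
  fixes k K :: nat
  assumes upper_band_dist: "\<And>p q x y. band_chain N {Suc k..<K} p q \<Longrightarrow> x \<in> snd p \<Longrightarrow> y \<in> snd q \<Longrightarrow>
    dist x y \<le> r ^ Suc k"
begin

lemma adjoins_dist:
  assumes "adjoins N {Suc k..<K} P Z" "x \<in> snd P"
  shows "\<exists>z\<in>snd Z. dist x z \<le> r ^ Suc k"
proof (cases "P = Z")
  case True
  then show ?thesis
    using assms(2) r_pos by (intro bexI[of _ x]) auto
next
  case False
  then obtain Q z where "band_chain N {Suc k..<K} P Q" "z \<in> snd Q" "z \<in> snd Z"
    using assms(1) unfolding adjoins_def by blast
  then show ?thesis
    using upper_band_dist assms(2) by blast
qed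

lemma adjoins_linked_band:
  assumes "adjoins N {Suc k..<K} q Z" "Z \<in> N" "fst Z = k" "linked N {k..<K} q s"
  shows "adjoins N {Suc k..<K} s Z"
proof -
  have s: "s \<in> N" "fst s \<in> {k..<K}" "snd q \<inter> snd s \<noteq> {}"
    using assms(4) by (auto simp: linked_def)
  show ?thesis
  proof (cases "fst s = k")
    case True
    obtain w where w: "w \<in> snd q" "w \<in> snd s"
      using s(3) by blast
    then obtain z where z: "z \<in> snd Z" "dist w z \<le> r ^ Suc k"
      using adjoins_dist[OF assms(1)] by blast
    have "0 < r ^ Suc k"
      using r_pos by simp
    then have "dist w z \<le> 2 * r ^ Suc (fst s)"
      using z(2) True by simp
    then have "s = Z"
      using same_level_eq[OF s(1) assms(2)] w(2) z(1) True assms(3) by simp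
    then show ?thesis
      unfolding adjoins_def by blast
  next
    case False
    then show ?thesis
      using adjoins_linked[OF assms(1) s(1)] s by auto
  qed
qed

text \<open>The members of a chain lying above level \<open>k\<close> are too close together to bridge two
  distinct level-\<open>k\<close> members, so a chain in the band \<open>k..<K\<close> meets at most one of them.\<close>

lemma band_chain_cases:
  assumes "band_chain N {k..<K} p q"
  shows "band_chain N {Suc k..<K} p q \<or>
    (\<exists>Z\<in>N. fst Z = k \<and> adjoins N {Suc k..<K} p Z \<and> adjoins N {Suc k..<K} q Z)"
proof -
  let ?U = "{Suc k..<K}"
  have p: "p \<in> N" "fst p \<in> {k..<K}" and "(linked N {k..<K})\<^sup>*\<^sup>* p q"
    using assms unfolding band_chain_def by auto
  from this(3) show ?thesis
  proof (induction rule: rtranclp_induct)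
    case base
    show ?case
      using p band_chain_refl[of p N ?U] unfolding adjoins_def by (cases "fst p = k") auto
  next
    case (step q s)
    have s: "s \<in> N" "fst s \<in> {k..<K}" "snd q \<inter> snd s \<noteq> {}"
      using step.hyps(2) by (auto simp: linked_def)
    from step.IH show ?case
    proof
      assume pq: "band_chain N ?U p q"
      show ?thesis
      proof (cases "fst s = k")
        case True
        then show ?thesis
          using pq s unfolding adjoins_def by blast
      next
        case False
        then have "band_chain N ?U p s"
          using step.hyps(2) s(2) by (intro band_chain_snoc[OF pq]) (auto simp: linked_def)
        then show ?thesis ..
      qed
    next
      assume "\<exists>Z\<in>N. fst Z = k \<and> adjoins N ?U p Z \<and> adjoins N ?U q Z"
      then show ?thesis
        using adjoins_linked_band step.hyps(2) by blast
    qed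
  qed
qed

lemma band_chain_dist_step:
  assumes "band_chain N {k..<K} p q" "x \<in> snd p" "y \<in> snd q"
  shows "dist x y \<le> r ^ k"
  using band_chain_cases[OF assms(1)]
proof
  assume "band_chain N {Suc k..<K} p q"
  then have "dist x y \<le> r ^ Suc k"
    using upper_band_dist assms(2,3) by blast
  moreover have "0 < r ^ k"
    using r_pos by simp
  ultimately show ?thesis
    using power_Suc_le_quarter[of k] by linarith
next
  assume "\<exists>Z\<in>N. fst Z = k \<and> adjoins N {Suc k..<K} p Z \<and> adjoins N {Suc k..<K} q Z"
  then obtain Z where Z: "Z \<in> N" "fst Z = k" "adjoins N {Suc k..<K} p Z" "adjoins N {Suc k..<K} q Z"
    by blast
  obtain z1 z2 where z: "z1 \<in> snd Z" "dist x z1 \<le> r ^ Suc k" "z2 \<in> snd Z" "dist y z2 \<le> r ^ Suc k"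
    using adjoins_dist[OF Z(3) assms(2)] adjoins_dist[OF Z(4) assms(3)] by blast
  have "dist z1 z2 \<le> r ^ k / 2"
    using dist_level[of k "snd Z" z1 z2] Z(1,2) z(1,3) by (metis prod.collapse)
  then show ?thesis
    using z(2,4) power_Suc_le_quarter[of k] dist_triangle[of x y z1] dist_triangle[of z1 y z2]
      dist_commute[of y z2] by linarith
qed

end

lemma band_chain_dist:
  assumes "band_chain N {k..<K} p q" "x \<in> snd p" "y \<in> snd q"
  shows "dist x y \<le> r ^ k"
proof -
  have "k \<le> K"
    using assms(1) by (auto simp: band_chain_def)
  then have "\<forall>p q x y. band_chain N {k..<K} p q \<longrightarrow> x \<in> snd p \<longrightarrow> y \<in> snd q \<longrightarrow> dist x y \<le> r ^ k"
  proof (induction k rule: inc_induct)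
    case base
    then show ?case by (simp add: band_chain_def)
  next
    case (step k)
    then show ?case
      using band_chain_dist_step[of k K] by blast
  qed
  then show ?thesis
    using assms by blast
qed

lemma band_chain_dist_atLeast:
  assumes "band_chain N {k..} p q" "x \<in> snd p" "y \<in> snd q"
  shows "dist x y \<le> r ^ k"
  using band_chain_bounded[OF assms(1)] band_chain_dist assms(2,3) by blast

lemma cluster_near:
  assumes "(j, U) \<in> N" "y \<in> cluster N (j, U)"
  shows "\<exists>u\<in>U. dist u y \<le> r ^ Suc j"
proof -
  obtain q where q: "(linked N {Suc j..})\<^sup>*\<^sup>* (j, U) q" "y \<in> snd q"
    using assms(2) unfolding mem_cluster_iff by auto
  from q(1) show ?thesis
  proof (cases rule: converse_rtranclpE)
    case base
    then show ?thesis
      using q(2) r_pos by (intro bexI[of _ y]) auto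
  next
    case (step p)
    then obtain u where "u \<in> U" "u \<in> snd p" "band_chain N {Suc j..} p q"
      unfolding linked_def band_chain_def by auto
    then show ?thesis
      using band_chain_dist_atLeast q(2) by blast
  qed
qed

lemma dist_cluster:
  assumes "(j, U) \<in> N" "w \<in> U" "y \<in> cluster N (j, U)"
  shows "dist w y \<le> r ^ j / 2 + r ^ Suc j"
proof -
  obtain u where "u \<in> U" "dist u y \<le> r ^ Suc j"
    using cluster_near[OF assms(1,3)] by blast
  moreover have "dist w u \<le> r ^ j / 2"
    using dist_level assms(1,2) \<open>u \<in> U\<close> by blast
  ultimately show ?thesis
    using dist_triangle[of w y u] by linarith
qed

lemma cluster_dist:
  assumes "(j, U) \<in> N" "x \<in> cluster N (j, U)" "y \<in> cluster N (j, U)"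
  shows "dist x y \<le> r ^ j"
proof -
  obtain u where u: "u \<in> U" "dist u x \<le> r ^ Suc j"
    using cluster_near[OF assms(1,2)] by blast
  then have "dist u y \<le> r ^ j / 2 + r ^ Suc j"
    using dist_cluster[OF assms(1) _ assms(3)] by blast
  then show ?thesis
    using u(2) power_Suc_le_quarter[of j] dist_triangle3[of x y u] by linarith
qed

lemma cluster_disjoint:
  assumes "(j, U) \<in> N" "(j, W) \<in> N" "U \<noteq> W"
  shows "cluster N (j, U) \<inter> cluster N (j, W) = {}"
proof (rule ccontr)
  assume "cluster N (j, U) \<inter> cluster N (j, W) \<noteq> {}"
  then obtain y where "y \<in> cluster N (j, U)" "y \<in> cluster N (j, W)"
    by blast
  then obtain u w where "u \<in> U" "dist u y \<le> r ^ Suc j" "w \<in> W" "dist w y \<le> r ^ Suc j"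
    using cluster_near assms(1,2) by meson
  moreover have "2 * r ^ Suc j < dist u w"
    using separated_level[OF assms] \<open>u \<in> U\<close> \<open>w \<in> W\<close> by blast
  ultimately show False
    using dist_triangle[of u w y] dist_commute[of y w] by linarith
qed

end

section \<open>Nested colored covers at geometric scales\<close>

definition shrink :: "real \<Rightarrow> 'a::metric_space set \<Rightarrow> 'a set" where
  "shrink t U = {x. \<exists>e>t. ball x e \<subseteq> U}"

lemma shrink_subset: "0 \<le> t \<Longrightarrow> shrink t U \<subseteq> U"
  unfolding shrink_def by force

lemma ball_subset_shrink:
  assumes "ball z a \<subseteq> U" "b + t < a"
  shows "ball z b \<subseteq> shrink t U"
proof
  fix y assume y: "y \<in> ball z b"
  have "ball y (a - dist z y) \<subseteq> ball z a"
  proof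
    fix w assume "w \<in> ball y (a - dist z y)"
    then show "w \<in> ball z a"
      using dist_triangle[of z w y] by simp
  qed
  then show "y \<in> shrink t U"
    unfolding shrink_def using assms y by (intro CollectI exI[of _ "a - dist z y"]) auto
qed

lemma open_shrink: "open (shrink t U)"
  unfolding open_contains_ball
proof
  fix x assume "x \<in> shrink t U"
  then obtain e where e: "t < e" "ball x e \<subseteq> U"
    unfolding shrink_def by auto
  moreover have "(e - t) / 2 + t < e"
    using e(1) by (simp add: field_simps)
  ultimately have "ball x ((e - t) / 2) \<subseteq> shrink t U"
    by (intro ball_subset_shrink)
  then show "\<exists>e>0. ball x e \<subseteq> shrink t U"
    using e(1) by (intro exI[of _ "(e - t) / 2"]) auto
qed

lemma dist_shrink_disjoint:
  assumes "0 \<le> t" "U \<inter> U' = {}" "x \<in> shrink t U" "y \<in> shrink t U'"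
  shows "t < dist x y"
proof -
  obtain e where e: "t < e" "ball x e \<subseteq> U"
    using assms(3) unfolding shrink_def by auto
  have "y \<notin> ball x e"
    using e(2) assms(2,4) shrink_subset[OF assms(1)] by blast
  then show ?thesis
    using e(1) by simp
qed

definition nested_colored_coverings ::
    "nat \<Rightarrow> real \<Rightarrow> real \<Rightarrow> real \<Rightarrow> nat set \<Rightarrow> (nat \<Rightarrow> nat \<Rightarrow> 'a::metric_space set set) \<Rightarrow> bool" where
  "nested_colored_coverings n c0 \<delta> r A \<U> \<longleftrightarrow>
     card A = n + 1 \<and>
     (\<forall>j\<ge>1. open_covering (\<Union>a\<in>A. \<U> j a) \<and> (\<forall>a\<in>A. disjoint (\<U> j a))) \<and>
     (\<forall>j\<ge>1. ereal (\<delta> * r ^ j) \<le> mesh (\<Union>a\<in>A. \<U> j a) \<and>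
             mesh (\<Union>a\<in>A. \<U> j a) \<le> ereal (r ^ j) \<and>
             Leb (\<Union>a\<in>A. \<U> j a) \<ge> ereal c0 * mesh (\<Union>a\<in>A. \<U> j a)) \<and>
     (\<forall>i j. 1 \<le> j \<and> j < i \<longrightarrow> inscribed (\<Union>a\<in>A. \<U> i a) (\<Union>a\<in>A. \<U> j a)) \<and>
     (\<forall>a\<in>A. separated (\<Union>j\<in>{1..}. \<U> j a))"

locale colored_Lebesgue_scales =
  fixes n :: nat and c r :: real and F :: "nat \<Rightarrow> nat \<Rightarrow> 'a::metric_space set set"
  assumes c_pos: "0 < c" and c_le_1: "c \<le> 1" and r_pos: "0 < r" and r_small: "r < c / 8"
    and colored_cover: "\<And>k. 1 \<le> k \<Longrightarrow> colored_Lebesgue_cover n (c * (r ^ k / 2)) (r ^ k / 2) (F k)"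
    and annulus_point: "\<And>\<tau> (z::'a). 0 < \<tau> \<Longrightarrow> \<tau> \<le> r \<Longrightarrow> \<exists>w. c * \<tau> / 2 \<le> dist z w \<and> dist z w \<le> \<tau>"
begin

definition piece :: "nat \<Rightarrow> nat \<Rightarrow> 'a set set" where
  "piece k i = shrink (c * r ^ k / 4) ` F k i"

definition pieces :: "nat \<Rightarrow> (nat \<times> 'a set) set" where
  "pieces i = {(k, W) | k W. 1 \<le> k \<and> W \<in> piece k i}"

definition cover :: "nat \<Rightarrow> nat \<Rightarrow> 'a set set" where
  "cover j i = (\<lambda>W. cluster (pieces i) (j, W)) ` piece j i"

lemma shrink_radius_nonneg: "0 \<le> c * r ^ k / 4"
  using c_pos r_pos by simp

lemma dist_piece:
  assumes "1 \<le> k" "W \<in> piece k i" "x \<in> W" "y \<in> W"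
  shows "dist x y \<le> r ^ k / 2"
proof -
  obtain U where U: "U \<in> F k i" "W = shrink (c * r ^ k / 4) U"
    using assms(2) unfolding piece_def by blast
  then have "x \<in> U" "y \<in> U"
    using shrink_subset[OF shrink_radius_nonneg] assms(3,4) by auto
  moreover have "\<forall>U\<in>F k i. \<forall>x\<in>U. \<forall>y\<in>U. dist x y \<le> r ^ k / 2"
    using colored_cover[OF assms(1)] unfolding colored_Lebesgue_cover_def by blast
  ultimately show ?thesis
    using U(1) by blast
qed

lemma separated_piece:
  assumes "1 \<le> k" "W \<in> piece k i" "W' \<in> piece k i" "W \<noteq> W'" "x \<in> W" "y \<in> W'"
  shows "2 * r ^ Suc k < dist x y"
proof -
  obtain U U' where U: "U \<in> F k i" "W = shrink (c * r ^ k / 4) U"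
    and U': "U' \<in> F k i" "W' = shrink (c * r ^ k / 4) U'"
    using assms(2,3) unfolding piece_def by blast
  have "disjoint (F k i)"
    using colored_cover[OF assms(1)] unfolding colored_Lebesgue_cover_def by blast
  moreover have "U \<noteq> U'"
    using U(2) U'(2) assms(4) by auto
  ultimately have "U \<inter> U' = {}"
    using U(1) U'(1) unfolding disjoint_def pairwise_def disjnt_def by blast
  then have "c * r ^ k / 4 < dist x y"
    using dist_shrink_disjoint[OF shrink_radius_nonneg] U U' assms(5,6) by blast
  moreover have "2 * r ^ Suc k < c * r ^ k / 4"
  proof -
    have "2 * r * r ^ k < c / 4 * r ^ k"
      using r_small r_pos by (intro mult_strict_right_mono) auto
    then show ?thesis
      by simp
  qed
  ultimately show ?thesis
    by linarith
qed

lemma multiscale_family_pieces: "multiscale_family (pieces i) r"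
proof
  show "0 < r" "r \<le> 1 / 4"
    using r_pos r_small c_le_1 by auto
next
  fix k W x y assume "(k, W) \<in> pieces i" "x \<in> W" "y \<in> W"
  then show "dist x y \<le> r ^ k / 2"
    using dist_piece unfolding pieces_def by blast
next
  fix k W W' x y assume "(k, W) \<in> pieces i" "(k, W') \<in> pieces i" "W \<noteq> W'" "x \<in> W" "y \<in> W'"
  then show "2 * r ^ Suc k < dist x y"
    using separated_piece unfolding pieces_def by blast
qed

lemma open_pieces: "q \<in> pieces i \<Longrightarrow> open (snd q)"
  unfolding pieces_def piece_def using open_shrink by auto

lemma cover_memE:
  assumes "X \<in> cover j i" "1 \<le> j"
  obtains W where "(j, W) \<in> pieces i" "X = cluster (pieces i) (j, W)"
  using assms unfolding cover_def pieces_def by auto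

lemma ball_in_cover:
  assumes "1 \<le> j"
  shows "\<exists>i\<le>n. \<exists>X\<in>cover j i. ball z (c * r ^ j / 8) \<subseteq> X"
proof -
  obtain i U where U: "i \<le> n" "U \<in> F j i" "ball z (c * (r ^ j / 2)) \<subseteq> U"
    using colored_cover[OF assms] unfolding colored_Lebesgue_cover_def by blast
  have "c * r ^ j / 8 + c * r ^ j / 4 < c * (r ^ j / 2)"
    using c_pos r_pos by simp
  then have "ball z (c * r ^ j / 8) \<subseteq> shrink (c * r ^ j / 4) U"
    by (rule ball_subset_shrink[OF U(3)])
  moreover have "shrink (c * r ^ j / 4) U \<subseteq> cluster (pieces i) (j, shrink (c * r ^ j / 4) U)"
    using subset_cluster[of "(j, _)"] by simp
  ultimately show ?thesis
    using U(1,2) unfolding cover_def piece_def by blast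
qed

end

context colored_Lebesgue_scales
begin

lemma UN_cover_memE:
  assumes "X \<in> (\<Union>i\<in>I. cover j i)" "1 \<le> j"
  obtains i W where "(j, W) \<in> pieces i" "X = cluster (pieces i) (j, W)"
proof -
  from assms(1) obtain i where "X \<in> cover j i"
    by blast
  from this assms(2) obtain W where "(j, W) \<in> pieces i" "X = cluster (pieces i) (j, W)"
    by (rule cover_memE)
  then show thesis
    by (rule that)
qed

lemma open_covering_cover:
  assumes "1 \<le> j"
  shows "open_covering (\<Union>i\<le>n. cover j i)"
  unfolding open_covering_def
proof (intro conjI ballI)
  fix X assume "X \<in> (\<Union>i\<le>n. cover j i)"
  then obtain i W where "(j, W) \<in> pieces i" "X = cluster (pieces i) (j, W)"
    using assms by (rule UN_cover_memE)
  then show "open X"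
    using open_cluster[OF open_pieces] by simp
next
  show "\<Union>(\<Union>i\<le>n. cover j i) = UNIV"
  proof (intro set_eqI iffI)
    fix z :: 'a
    obtain i X where "i \<le> n" "X \<in> cover j i" "ball z (c * r ^ j / 8) \<subseteq> X"
      using ball_in_cover[OF assms] by blast
    moreover have "z \<in> ball z (c * r ^ j / 8)"
      using c_pos r_pos by simp
    ultimately show "z \<in> \<Union>(\<Union>i\<le>n. cover j i)"
      by blast
  qed simp
qed

lemma disjoint_cover:
  assumes "1 \<le> j"
  shows "disjoint (cover j i)"
  unfolding disjoint_def pairwise_def disjnt_def
proof (intro ballI impI)
  fix X Y assume XY: "X \<in> cover j i" "Y \<in> cover j i" "X \<noteq> Y"
  obtain W where W: "(j, W) \<in> pieces i" "X = cluster (pieces i) (j, W)"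
    using XY(1) assms by (rule cover_memE)
  obtain W' where W': "(j, W') \<in> pieces i" "Y = cluster (pieces i) (j, W')"
    using XY(2) assms by (rule cover_memE)
  have "W \<noteq> W'"
    using XY(3) W(2) W'(2) by auto
  then show "X \<inter> Y = {}"
    using multiscale_family.cluster_disjoint[OF multiscale_family_pieces W(1) W'(1)] W(2) W'(2) by simp
qed

lemma mesh_cover_le:
  assumes "1 \<le> j"
  shows "mesh (\<Union>i\<le>n. cover j i) \<le> ereal (r ^ j)"
proof (rule mesh_le)
  fix X assume "X \<in> (\<Union>i\<le>n. cover j i)"
  then obtain i W where W: "(j, W) \<in> pieces i" "X = cluster (pieces i) (j, W)"
    using assms by (rule UN_cover_memE)
  have "dist x y \<le> r ^ j" if "x \<in> X" "y \<in> X" for x y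
    using multiscale_family.cluster_dist[OF multiscale_family_pieces W(1)] that W(2) by simp
  then show "ediam X \<le> ereal (r ^ j)"
    using r_pos by (simp add: ediam_le)
qed (use r_pos in simp)

lemma ball_in_cover_ediam:
  assumes "1 \<le> j"
  shows "\<exists>X\<in>(\<Union>i\<le>n. cover j i). ball z (c * r ^ j / 8) \<subseteq> X \<and> ereal (c\<^sup>2 / 32 * r ^ j) \<le> ediam X"
proof -
  obtain i X where X: "i \<le> n" "X \<in> cover j i" "ball z (c * r ^ j / 8) \<subseteq> X"
    using ball_in_cover[OF assms] by blast
  define \<tau> where "\<tau> = c * r ^ j / 16"
  have "r ^ j \<le> r"
    using power_decreasing[of 1 j r] assms r_pos r_small c_le_1 by simp
  moreover have "c * r ^ j \<le> r ^ j"
    using c_pos c_le_1 r_pos by (simp add: mult_left_le_one_le)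
  ultimately have "\<tau> \<le> r"
    unfolding \<tau>_def using r_pos by linarith
  moreover have "0 < \<tau>"
    unfolding \<tau>_def using c_pos r_pos by simp
  ultimately obtain w where w: "c * \<tau> / 2 \<le> dist z w" "dist z w \<le> \<tau>"
    using annulus_point by blast
  have "z \<in> X" "w \<in> X"
    using X(3) w(2) \<open>0 < \<tau>\<close> unfolding \<tau>_def by (auto simp: subset_eq)
  then have "ereal (dist z w) \<le> ediam X"
    by (rule dist_le_ediam)
  moreover have "c\<^sup>2 / 32 * r ^ j \<le> dist z w"
    using w(1) unfolding \<tau>_def by (simp add: power2_eq_square)
  ultimately have "ereal (c\<^sup>2 / 32 * r ^ j) \<le> ediam X"
    using order_trans ereal_less_eq(3) by blast
  then show ?thesis
    using X by blast
qed

lemma mesh_cover_ge: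
  assumes "1 \<le> j"
  shows "ereal (c\<^sup>2 / 32 * r ^ j) \<le> mesh (\<Union>i\<le>n. cover j i)"
proof -
  obtain X where X: "X \<in> (\<Union>i\<le>n. cover j i)" "ereal (c\<^sup>2 / 32 * r ^ j) \<le> ediam X"
    using ball_in_cover_ediam[OF assms] by blast
  have "ediam X \<le> mesh (\<Union>i\<le>n. cover j i)"
    using X(1) by (rule ediam_le_mesh)
  with X(2) show ?thesis
    by (rule order_trans)
qed

lemma Leb_cover_ge:
  assumes "1 \<le> j"
  shows "ereal (c\<^sup>2 / 32 * r ^ j) \<le> Leb (\<Union>i\<le>n. cover j i)"
  unfolding Leb_def
proof (rule INF_greatest)
  fix z :: 'a
  obtain X where X: "X \<in> (\<Union>i\<le>n. cover j i)" "ball z (c * r ^ j / 8) \<subseteq> X"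
    "ereal (c\<^sup>2 / 32 * r ^ j) \<le> ediam X"
    using ball_in_cover_ediam[OF assms, of z] by blast
  have "c / 4 * (c * r ^ j / 8) \<le> c * r ^ j / 8"
    using c_pos c_le_1 r_pos by (intro mult_left_le_one_le) auto
  then have "c\<^sup>2 / 32 * r ^ j \<le> c * r ^ j / 8"
    by (simp add: power2_eq_square)
  moreover have "0 < c * r ^ j / 8"
    using c_pos r_pos by simp
  ultimately show "ereal (c\<^sup>2 / 32 * r ^ j) \<le> Leb_at (\<Union>i\<le>n. cover j i) z"
    using Leb_at_geI[OF X(1,2) _ X(3)] by blast
qed

lemma cluster_radius_lt:
  assumes "j < k"
  shows "r ^ k / 2 + r ^ Suc k < c * r ^ j / 8"
proof -
  have "r * r ^ k \<le> r ^ k / 2"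
    using r_pos r_small c_le_1 by (simp add: mult_right_le_one_le)
  moreover have "r ^ k \<le> r ^ Suc j"
    using power_decreasing[of "Suc j" k r] assms r_pos r_small c_le_1 by simp
  moreover have "r * r ^ j < c / 8 * r ^ j"
    using r_small r_pos by (intro mult_strict_right_mono) auto
  ultimately show ?thesis
    unfolding power_Suc by linarith
qed

lemma inscribed_cover:
  assumes "1 \<le> j" "j < k"
  shows "inscribed (\<Union>i\<le>n. cover k i) (\<Union>i\<le>n. cover j i)"
  unfolding inscribed_def
proof
  fix Y assume "Y \<in> (\<Union>i\<le>n. cover k i)"
  moreover have "1 \<le> k"
    using assms by simp
  ultimately obtain i W where W: "(k, W) \<in> pieces i" "Y = cluster (pieces i) (k, W)"
    by (rule UN_cover_memE)
  show "\<exists>X\<in>(\<Union>i\<le>n. cover j i). Y \<subseteq> X"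
  proof (cases "W = {}")
    case True
    then have "Y = {}"
      using W(2) cluster_empty by simp
    moreover obtain i X where "i \<le> n" "X \<in> cover j i"
      using ball_in_cover[OF assms(1)] by blast
    ultimately show ?thesis
      by blast
  next
    case False
    then obtain w where "w \<in> W"
      by blast
    have "Y \<subseteq> ball w (c * r ^ j / 8)"
    proof
      fix y assume "y \<in> Y"
      then have "dist w y \<le> r ^ k / 2 + r ^ Suc k"
        using multiscale_family.dist_cluster[OF multiscale_family_pieces W(1) \<open>w \<in> W\<close>] W(2) by simp
      then show "y \<in> ball w (c * r ^ j / 8)"
        using cluster_radius_lt[OF assms(2)] by simp
    qed
    then show ?thesis
      using ball_in_cover[OF assms(1), of w] by blast
  qed
qed

lemma separated_cover: "separated (\<Union>j\<in>{1..}. cover j i)"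
  unfolding separated_def
proof (intro ballI impI)
  fix X Y assume XY: "X \<in> (\<Union>j\<in>{1..}. cover j i)" "Y \<in> (\<Union>j\<in>{1..}. cover j i)" "X \<noteq> Y"
  obtain j k where jk: "X \<in> cover j i" "1 \<le> j" "Y \<in> cover k i" "1 \<le> k"
    using XY(1,2) by auto
  obtain U where U: "(j, U) \<in> pieces i" "X = cluster (pieces i) (j, U)"
    using jk(1,2) by (rule cover_memE)
  obtain W where W: "(k, W) \<in> pieces i" "Y = cluster (pieces i) (k, W)"
    using jk(3,4) by (rule cover_memE)
  consider "j = k" | "j < k" | "k < j"
    by linarith
  then show "X \<inter> Y = {} \<or> X \<subseteq> Y \<or> Y \<subseteq> X"
  proof cases
    case 1
    then have "U \<noteq> W"
      using U(2) W(2) XY(3) by auto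
    then show ?thesis
      using multiscale_family.cluster_disjoint[OF multiscale_family_pieces U(1)] W(1) U(2) W(2) 1
      by simp
  next
    case 2
    then show ?thesis
      using cluster_subset_cluster[OF U(1) W(1)] U(2) W(2) by blast
  next
    case 3
    then show ?thesis
      using cluster_subset_cluster[OF W(1) U(1)] U(2) W(2) by blast
  qed
qed

lemma nested_coverings: "nested_colored_coverings n (c\<^sup>2 / 32) (c\<^sup>2 / 32) r {..n} cover"
proof -
  have "ereal (c\<^sup>2 / 32) * mesh (\<Union>i\<le>n. cover j i) \<le> Leb (\<Union>i\<le>n. cover j i)" if "1 \<le> j" for j
  proof -
    have "ereal (c\<^sup>2 / 32) * mesh (\<Union>i\<le>n. cover j i) \<le> ereal (c\<^sup>2 / 32) * ereal (r ^ j)"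
      using mesh_cover_le[OF that] by (intro ereal_mult_left_mono) auto
    then show ?thesis
      using Leb_cover_ge[OF that] by simp
  qed
  then show ?thesis
    using open_covering_cover disjoint_cover mesh_cover_ge mesh_cover_le inscribed_cover separated_cover
    unfolding nested_colored_coverings_def by (intro conjI allI impI ballI) simp_all
qed

end

lemma nested_colored_coverings_exist:
  fixes n :: nat
  assumes c: "0 < c" "c \<le> 1" and r: "0 < r" "r < c / 8"
    and covers: "\<And>\<tau>. 0 < \<tau> \<Longrightarrow> \<tau> \<le> r \<Longrightarrow> \<exists>F :: nat \<Rightarrow> 'a::metric_space set set. colored_Lebesgue_cover n (c * \<tau>) \<tau> F"
    and annulus: "\<And>\<tau> z :: 'a. 0 < \<tau> \<Longrightarrow> \<tau> \<le> r \<Longrightarrow> \<exists>w. c * \<tau> / 2 \<le> dist z w \<and> dist z w \<le> \<tau>"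
  shows "\<exists>A \<U>. nested_colored_coverings n (c\<^sup>2 / 32) (c\<^sup>2 / 32) r A (\<U> :: nat \<Rightarrow> nat \<Rightarrow> 'a set set)"
proof -
  have "\<exists>F :: nat \<Rightarrow> 'a set set. colored_Lebesgue_cover n (c * (r ^ k / 2)) (r ^ k / 2) F" if "1 \<le> k" for k
  proof -
    have "r ^ k \<le> r"
      using power_decreasing[of 1 k r] that r c by simp
    moreover have "0 < r ^ k"
      using r(1) by simp
    ultimately have "0 < r ^ k / 2" "r ^ k / 2 \<le> r"
      by auto
    then show ?thesis
      by (rule covers)
  qed
  then obtain F :: "nat \<Rightarrow> nat \<Rightarrow> 'a set set"
    where F: "\<And>k. 1 \<le> k \<Longrightarrow> colored_Lebesgue_cover n (c * (r ^ k / 2)) (r ^ k / 2) (F k)"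
    by metis
  interpret colored_Lebesgue_scales n c r F
    using c r F annulus by unfold_locales auto
  show ?thesis
    using nested_coverings by blast
qed

theorem proposition4p4:
  fixes n :: nat
  assumes "cdim TYPE('a::metric_space) \<le> enat n"
  shows "\<exists>c0 > 0. \<exists>\<delta> > 0. \<exists>r0 > (0::real). \<forall>r. 0 < r \<and> r < r0 \<longrightarrow>
    (\<exists>A :: nat set. \<exists>\<U> :: nat \<Rightarrow> nat \<Rightarrow> 'a set set.
       card A = n + 1 \<and>
       (\<forall>j\<ge>1. open_covering (\<Union>a\<in>A. \<U> j a) \<and> (\<forall>a\<in>A. disjoint (\<U> j a))) \<and>
       (\<forall>j\<ge>1. ereal (\<delta> * r ^ j) \<le> mesh (\<Union>a\<in>A. \<U> j a) \<and>
               mesh (\<Union>a\<in>A. \<U> j a) \<le> ereal (r ^ j) \<and>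
               Leb (\<Union>a\<in>A. \<U> j a) \<ge> ereal c0 * mesh (\<Union>a\<in>A. \<U> j a)) \<and>
       (\<forall>i j. 1 \<le> j \<and> j < i \<longrightarrow> inscribed (\<Union>a\<in>A. \<U> i a) (\<Union>a\<in>A. \<U> j a)) \<and>
       (\<forall>a\<in>A. separated (\<Union>j\<in>{1..}. \<U> j a)))"
proof -
  obtain c \<tau>0 where c: "0 < c" "c \<le> 1" "0 < \<tau>0"
    and covers: "\<And>\<tau>. 0 < \<tau> \<Longrightarrow> \<tau> < \<tau>0 \<Longrightarrow> \<exists>F :: nat \<Rightarrow> 'a set set. colored_Lebesgue_cover n (c * \<tau>) \<tau> F"
    and annulus: "\<And>\<tau> z :: 'a. 0 < \<tau> \<Longrightarrow> \<tau> < \<tau>0 \<Longrightarrow> \<exists>w. c * \<tau> / 2 \<le> dist z w \<and> dist z w \<le> \<tau>"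
    using cdim_le_imp_colored_Lebesgue_covers[OF assms] by blast
  have "\<exists>A \<U>. nested_colored_coverings n (c\<^sup>2 / 32) (c\<^sup>2 / 32) r A (\<U> :: nat \<Rightarrow> nat \<Rightarrow> 'a set set)"
    if r: "0 < r" "r < min \<tau>0 (c / 8)" for r
  proof (rule nested_colored_coverings_exist[OF c(1,2) r(1)])
    show "r < c / 8"
      using r(2) by simp
  next
    fix \<tau> :: real assume "0 < \<tau>" "\<tau> \<le> r"
    then show "\<exists>F :: nat \<Rightarrow> 'a set set. colored_Lebesgue_cover n (c * \<tau>) \<tau> F"
      using r(2) by (intro covers) auto
  next
    fix \<tau> :: real and z :: 'a assume "0 < \<tau>" "\<tau> \<le> r"
    then show "\<exists>w. c * \<tau> / 2 \<le> dist z w \<and> dist z w \<le> \<tau>"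
      using r(2) by (intro annulus) auto
  qed
  moreover have "0 < c\<^sup>2 / 32" "0 < min \<tau>0 (c / 8)"
    using c by auto
  ultimately show ?thesis
    unfolding nested_colored_coverings_def by blast
qed

end
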